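(* Let $n_1,n_2\ge 1$ be integers, $n=n_1+n_2>3$, and consider a uniformly random arrangement of $n_1$ symbols $x$ and $n_2$ symbols $y$ (all $\binom{n}{n_1}$ arrangements equally likely). Let $R_1$ and $R_2$ be the numbers of runs of $x$'s and of $y$'s, respectively, and $R_M=\max(R_1,R_2)$. Then (i) $\mathrm{Var}(R_M\mid R_1>R_2)=\dfrac{n_2(n_2-1)(n_1-2)(n_1-1)}{(n-2)^2(n-3)}$; (ii) $\mathrm{Var}(R_M\mid R_1<R_2)=\dfrac{n_1(n_1-1)(n_2-2)(n_2-1)}{(n-2)^2(n-3)}$; (iii) $\mathrm{Var}(R_M\mid R_1=R_2)=\dfrac{(n_2-1)^2(n_1-1)^2}{(n-2)^2(n-3)}$.
   Context: A run is a maximal block of consecutive identical symbols in the arrangement. Conditional variances given an event are considered when that event has positive probability. *)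

theory Defs
  imports "HOL-Probability.Probability"
begin

datatype sym = X | Y

definition arrangements :: "nat \<Rightarrow> nat \<Rightarrow> sym list set" where
  "arrangements n1 n2 = {w. length w = n1 + n2 \<and> count_list w X = n1}"

definition arr_pmf :: "nat \<Rightarrow> nat \<Rightarrow> sym list pmf" where
  "arr_pmf n1 n2 = pmf_of_set (arrangements n1 n2)"

definition runs :: "sym \<Rightarrow> sym list \<Rightarrow> nat" where
  "runs a w = length (filter (\<lambda>s. s = a) (remdups_adj w))"

definition R1 :: "sym list \<Rightarrow> nat" where "R1 w = runs X w"
definition R2 :: "sym list \<Rightarrow> nat" where "R2 w = runs Y w"
definition RM :: "sym list \<Rightarrow> nat" where "RM w = max (R1 w) (R2 w)"

definition cond_var :: "'a pmf \<Rightarrow> 'a set \<Rightarrow> ('a \<Rightarrow> real) \<Rightarrow> real" where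
  "cond_var p E f = measure_pmf.variance (cond_pmf p E) f"

end

theory Submission
  imports Defs
begin

text \<open>
  Since \<open>R1 w - R2 w = [hd w = X] + [last w = X] - 1\<close>, each event is decided by the two end
  letters. \<open>R1 > R2\<close> means \<open>w = X u X\<close>; then \<open>RM w = R2 u + 1\<close> with \<open>u\<close> uniform among the
  arrangements of \<open>n1 - 2\<close> X's and \<open>n2\<close> Y's. \<open>R1 = R2\<close> means that \<open>w\<close> or its reversal is
  \<open>X u\<close> with \<open>u\<close> ending in Y; then \<open>RM w = R2 u\<close>. \<open>R1 < R2\<close> is \<open>R1 > R2\<close> with the letters swapped.
  Recursion on the last letter shows that \<open>(b-1 choose i) * (a+1 choose i+1)\<close> arrangements of
  \<open>a\<close> X's and \<open>b\<close> Y's have \<open>i + 1\<close> runs of Y, and \<open>(b-1 choose i) * (a choose i)\<close> of those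
  ending in Y. So in both cases \<open>R2 - 1\<close> is hypergeometric, and Vandermonde's identity gives
  its variance.
\<close>

section \<open>Vandermonde sums and the hypergeometric variance\<close>

lemma sum_binomial_mult_binomial_shift:
  "(\<Sum>i\<le>q. (q choose i) * (p choose (i + s))) = (p + q) choose (q + s)"
proof -
  have "(\<Sum>i\<le>q. (q choose i) * (p choose (i + s))) = (\<Sum>i\<le>q. (q choose (q - i)) * (p choose (i + s)))"
    by (rule sum.cong) (auto intro: binomial_symmetric)
  also have "\<dots> = (\<Sum>k\<le>q. (q choose k) * (p choose (q + s - k)))"
    unfolding atMost_atLeast0
    by (subst sum.atLeastAtMost_rev) (rule sum.cong, auto)
  also have "\<dots> = (\<Sum>k\<le>q + s. (q choose k) * (p choose (q + s - k)))"
    by (rule sum.mono_neutral_left) auto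
  also have "\<dots> = (q + p) choose (q + s)" by (rule vandermonde)
  finally show ?thesis by (simp add: add.commute)
qed

lemma sum_index_mult_binomial_shift:
  "(\<Sum>i\<le>q. i * (q choose i) * (p choose (i + s))) = q * ((p + q - 1) choose (q + s))"
proof (cases q)
  case 0
  then show ?thesis by simp
next
  case (Suc q')
  have "(\<Sum>i\<le>q. i * (q choose i) * (p choose (i + s)))
      = (\<Sum>i\<le>q'. Suc i * (Suc q' choose Suc i) * (p choose (i + Suc s)))"
    unfolding Suc by (subst sum.atMost_Suc_shift) simp
  also have "\<dots> = (\<Sum>i\<le>q'. Suc q' * ((q' choose i) * (p choose (i + Suc s))))"
    by (simp only: Suc_times_binomial mult.assoc)
  also have "\<dots> = Suc q' * ((p + q') choose (q' + Suc s))"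
    by (simp only: sum_distrib_left[symmetric] sum_binomial_mult_binomial_shift)
  finally show ?thesis using Suc by simp
qed

lemma sum_falling_index_mult_binomial_shift:
  "(\<Sum>i\<le>q. i * (i - 1) * (q choose i) * (p choose (i + s)))
     = q * (q - 1) * ((p + q - 2) choose (q + s))"
proof (cases q)
  case 0
  then show ?thesis by simp
next
  case (Suc q')
  have "(\<Sum>i\<le>q. i * (i - 1) * (q choose i) * (p choose (i + s)))
      = (\<Sum>i\<le>q'. i * (Suc i * (Suc q' choose Suc i)) * (p choose (i + Suc s)))"
    unfolding Suc
    by (subst sum.atMost_Suc_shift) (simp only: diff_Suc_1 add_Suc_right add_Suc mult_zero_left add_0 mult_ac)
  also have "\<dots> = (\<Sum>i\<le>q'. Suc q' * (i * (q' choose i) * (p choose (i + Suc s))))"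
    by (simp only: Suc_times_binomial mult_ac)
  also have "\<dots> = Suc q' * (q' * ((p + q' - 1) choose (q' + Suc s)))"
    by (simp only: sum_distrib_left[symmetric] sum_index_mult_binomial_shift)
  finally show ?thesis using Suc by (simp add: algebra_simps)
qed

lemma of_nat_mult_pred: "of_nat (n * (n - 1)) = (of_nat n * (of_nat n - 1) :: 'a :: comm_ring_1)"
  by (cases n) (simp_all add: algebra_simps)

lemma sum_hypergeometric_levels:
  fixes g :: "'a \<Rightarrow> nat" and h :: "nat \<Rightarrow> real"
  assumes "finite S"
    and level_card: "\<And>i. card {x \<in> S. g x = i} = (q choose i) * (p choose (i + s))"
  shows "(\<Sum>x\<in>S. h (g x)) = (\<Sum>i\<le>q. h i * real ((q choose i) * (p choose (i + s))))"
proof -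
  have g_le: "g x \<le> q" if "x \<in> S" for x
  proof (rule ccontr)
    assume "\<not> g x \<le> q"
    then have "card {y \<in> S. g y = g x} = 0" by (simp add: level_card)
    moreover have "x \<in> {y \<in> S. g y = g x}" using that by simp
    ultimately show False using \<open>finite S\<close> card_0_eq[of "{y \<in> S. g y = g x}"] by auto
  qed
  have "(\<Sum>x\<in>S. h (g x)) = (\<Sum>i\<le>q. \<Sum>x\<in>{y \<in> S. g y = i}. h (g x))"
    using g_le by (intro sum.group[symmetric] \<open>finite S\<close>) auto
  then show ?thesis by (simp add: level_card mult.commute)
qed

lemma hypergeometric_moments:
  fixes g :: "'a \<Rightarrow> nat"
  assumes "finite S"
    and level_card: "\<And>i. card {x \<in> S. g x = i} = (q choose i) * (p choose (i + s))"
  shows "real (card S) = real ((p + q) choose (q + s))"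
    and "(\<Sum>x\<in>S. real (g x)) = real q * real ((p + q - 1) choose (q + s))"
    and "(\<Sum>x\<in>S. (real (g x))^2)
           = real q * (real q - 1) * real ((p + q - 2) choose (q + s))
             + real q * real ((p + q - 1) choose (q + s))"
proof -
  note levels = sum_hypergeometric_levels[OF assms]
  have "real (card S) = (\<Sum>i\<le>q. real ((q choose i) * (p choose (i + s))))"
    using levels[of "\<lambda>_. 1"] by simp
  then show "real (card S) = real ((p + q) choose (q + s))"
    unfolding of_nat_sum[symmetric] sum_binomial_mult_binomial_shift .
  have "(\<Sum>x\<in>S. real (g x)) = (\<Sum>i\<le>q. real (i * (q choose i) * (p choose (i + s))))"
    using levels[of real] by (simp add: mult_ac)
  then show first: "(\<Sum>x\<in>S. real (g x)) = real q * real ((p + q - 1) choose (q + s))"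
    unfolding of_nat_sum[symmetric] sum_index_mult_binomial_shift by simp
  have "(\<Sum>x\<in>S. real (g x * (g x - 1)))
      = (\<Sum>i\<le>q. real (i * (i - 1) * (q choose i) * (p choose (i + s))))"
    using levels[of "\<lambda>i. real (i * (i - 1))"] by (simp add: mult_ac)
  then have falling: "(\<Sum>x\<in>S. real (g x * (g x - 1)))
      = real q * (real q - 1) * real ((p + q - 2) choose (q + s))"
    unfolding of_nat_sum[symmetric] sum_falling_index_mult_binomial_shift
    by (metis of_nat_mult of_nat_mult_pred)
  have square: "(real (g x))^2 = real (g x * (g x - 1)) + real (g x)" for x
    by (cases "g x") (simp_all add: power2_eq_square algebra_simps)
  show "(\<Sum>x\<in>S. (real (g x))^2)
           = real q * (real q - 1) * real ((p + q - 2) choose (q + s))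
             + real q * real ((p + q - 1) choose (q + s))"
    by (simp only: square sum.distrib first falling)
qed

lemma variance_pmf_of_set:
  fixes f :: "'a \<Rightarrow> real"
  assumes "finite B" "B \<noteq> {}"
  shows "measure_pmf.variance (pmf_of_set B) f =
    (\<Sum>x\<in>B. (f x - c)^2) / real (card B) - ((\<Sum>x\<in>B. f x - c) / real (card B))^2"
proof -
  define N where "N = real (card B)"
  have N_pos: "N > 0" using assms unfolding N_def by (simp add: card_gt_0_iff)
  define \<mu> where "\<mu> = (\<Sum>x\<in>B. f x) / N"
  define m where "m = (\<Sum>x\<in>B. f x - c) / N"
  have \<mu>_eq: "\<mu> = m + c"
    unfolding \<mu>_def m_def using N_pos by (simp add: sum_subtractf N_def field_simps)
  have sum_dev: "(\<Sum>x\<in>B. f x - c) = N * m" unfolding m_def using N_pos by simp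
  have "measure_pmf.variance (pmf_of_set B) f = (\<Sum>x\<in>B. (f x - \<mu>)^2) / N"
    unfolding \<mu>_def N_def by (simp add: integral_pmf_of_set[OF assms(2,1)])
  also have "(\<Sum>x\<in>B. (f x - \<mu>)^2) = (\<Sum>x\<in>B. (f x - c)^2 - 2 * m * (f x - c) + m^2)"
    unfolding \<mu>_eq by (rule sum.cong[OF refl]) (simp add: power2_eq_square algebra_simps)
  also have "\<dots> = (\<Sum>x\<in>B. (f x - c)^2) - 2 * m * (\<Sum>x\<in>B. f x - c) + N * m^2"
    by (simp only: sum.distrib sum_subtractf sum_distrib_left[symmetric] sum_constant N_def)
  finally show ?thesis
    unfolding sum_dev using N_pos unfolding m_def[symmetric] N_def[symmetric]
    by (simp add: field_simps power2_eq_square)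
qed

lemma variance_pmf_of_set_cong:
  fixes f g :: "'a \<Rightarrow> real"
  assumes "finite B" "B \<noteq> {}" "\<And>x. x \<in> B \<Longrightarrow> f x = g x + c"
  shows "measure_pmf.variance (pmf_of_set B) f = measure_pmf.variance (pmf_of_set B) g"
  using assms by (simp add: variance_pmf_of_set[OF assms(1,2), of f c]
      variance_pmf_of_set[OF assms(1,2), of g 0])

lemma variance_pmf_of_set_image:
  fixes f :: "'b \<Rightarrow> real"
  assumes "inj_on h B" "finite B" "B \<noteq> {}"
  shows "measure_pmf.variance (pmf_of_set (h ` B)) f = measure_pmf.variance (pmf_of_set B) (\<lambda>x. f (h x))"
  using assms by (simp add: variance_pmf_of_set[of _ _ 0] sum.reindex card_image)

lemma variance_pmf_of_set_union_image:
  fixes f :: "'a \<Rightarrow> real"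
  assumes "inj_on h B" "finite B" "B \<noteq> {}" "B \<inter> h ` B = {}" "\<And>x. x \<in> B \<Longrightarrow> f (h x) = f x"
  shows "measure_pmf.variance (pmf_of_set (B \<union> h ` B)) f = measure_pmf.variance (pmf_of_set B) f"
proof -
  have doubled: "(\<Sum>x\<in>B \<union> h ` B. k (f x)) = 2 * (\<Sum>x\<in>B. k (f x))" for k :: "real \<Rightarrow> real"
    using assms by (simp add: sum.union_disjoint sum.reindex)
  have "card (B \<union> h ` B) = 2 * card B"
    using assms by (simp add: card_Un_disjoint card_image)
  then show ?thesis
    using assms doubled[of "\<lambda>y. y^2"] doubled[of "\<lambda>y. y"]
    by (simp add: variance_pmf_of_set[of _ _ 0])
qed

text \<open>\<open>g\<close> is hypergeometric: it counts the marked balls among \<open>p - s\<close> drawn from an urn of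
  \<open>p + q\<close> balls, \<open>q\<close> of them marked, since \<open>p choose (i + s) = p choose (p - s - i)\<close> for \<open>i \<le> p - s\<close>.\<close>

lemma variance_hypergeometric:
  fixes g :: "'a \<Rightarrow> nat"
  assumes "finite S" "s \<le> p" "2 \<le> p + q"
    and level_card: "\<And>i. card {x \<in> S. g x = i} = (q choose i) * (p choose (i + s))"
  shows "measure_pmf.variance (pmf_of_set S) (\<lambda>x. real (g x)) =
    real q * real (p - s) * real p * real (q + s) / ((real (p + q))^2 * (real (p + q) - 1))"
proof -
  define M where "M = p + q"
  define k where "k = p - s"
  define N where "N = real (M choose (q + s))"
  define N1 where "N1 = real ((M - 1) choose (q + s))"
  define N2 where "N2 = real ((M - 2) choose (q + s))"
  note moments = hypergeometric_moments[OF \<open>finite S\<close> level_card, folded M_def, folded N_def N1_def N2_def]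
  have N_pos: "N > 0"
    unfolding N_def M_def using assms(2) by simp
  have M_gt_1: "real M > 1"
    using assms(3) by (simp add: M_def)
  have "real (M - (q + s)) * N = real M * N1"
    unfolding N_def N1_def by (simp only: binomial_absorb_comp flip: of_nat_mult)
  then have N1_eq: "N1 = real k * N / real M"
    using assms(2,3) by (simp add: M_def k_def field_simps)
  have "(M - 1 - (q + s)) * ((M - 1) choose (q + s)) = (M - 1) * ((M - 2) choose (q + s))"
    using binomial_absorb_comp[of "M - 1" "q + s"] by (simp add: numeral_2_eq_2)
  then have "real (M - 1 - (q + s)) * N1 = real (M - 1) * N2"
    unfolding N1_def N2_def by (metis of_nat_mult)
  moreover have "M - 1 - (q + s) = k - 1" "real (M - 1) = real M - 1"
    using assms(3) by (simp_all add: M_def k_def)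
  ultimately have "(real M - 1) * N2 = real (k - 1) * real k * N / real M"
    unfolding N1_eq by simp
  also have "real (k - 1) * real k = real k * (real k - 1)"
    by (cases k) (simp_all add: algebra_simps)
  finally have N2_eq: "N2 = real k * (real k - 1) * N / (real M * (real M - 1))"
    using M_gt_1 by (simp add: field_simps)
  have "S \<noteq> {}"
    using N_pos moments(1) by auto
  then have "measure_pmf.variance (pmf_of_set S) (\<lambda>x. real (g x)) =
        (real q * (real q - 1) * N2 + real q * N1) / N - (real q * N1 / N)^2"
    using variance_pmf_of_set[OF \<open>finite S\<close>, of _ 0] by (simp add: moments)
  also have "\<dots> = real q * (real q - 1) * (real k * (real k - 1)) / (real M * (real M - 1))
      + real q * real k / real M - (real q * real k / real M)^2"
    using N_pos unfolding N2_eq N1_eq by (simp add: add_divide_distrib)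
  also have "\<dots> = real q * real k * (real M - real q) * (real M - real k) / ((real M)^2 * (real M - 1))"
    using M_gt_1 by (simp add: field_simps power2_eq_square)
  finally show ?thesis
    using assms(2) by (simp add: M_def k_def)
qed

lemma variance_hypergeometric_Suc:
  fixes g :: "'a \<Rightarrow> nat"
  assumes "finite S" "s \<le> p" "2 \<le> p + q"
    and level_card: "\<And>i. card {x \<in> S. g x = Suc i} = (q choose i) * (p choose (i + s))"
    and pos: "\<And>x. x \<in> S \<Longrightarrow> 0 < g x"
  shows "measure_pmf.variance (pmf_of_set S) (\<lambda>x. real (g x)) =
    real q * real (p - s) * real p * real (q + s) / ((real (p + q))^2 * (real (p + q) - 1))"
proof -
  have levels: "{x \<in> S. g x - 1 = i} = {x \<in> S. g x = Suc i}" for i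
    using pos by fastforce
  have "card {x \<in> S. g x = Suc 0} \<noteq> 0"
    using assms(2) by (simp add: level_card)
  then have "S \<noteq> {}" by auto
  then have "measure_pmf.variance (pmf_of_set S) (\<lambda>x. real (g x))
      = measure_pmf.variance (pmf_of_set S) (\<lambda>x. real (g x - 1))"
  proof (rule variance_pmf_of_set_cong[OF \<open>finite S\<close>, where c = 1])
    show "real (g x) = real (g x - 1) + 1" if "x \<in> S" for x
      using pos[OF that] by simp
  qed
  also have "\<dots> = real q * real (p - s) * real p * real (q + s) / ((real (p + q))^2 * (real (p + q) - 1))"
    using assms(1-3) by (rule variance_hypergeometric) (simp only: levels level_card)
  finally show ?thesis .
qed

lemma cond_pmf_of_set:
  assumes "finite A" "A \<inter> E \<noteq> {}"
  shows "cond_pmf (pmf_of_set A) E = pmf_of_set (A \<inter> E)"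
proof (rule pmf_eqI)
  fix x
  have A: "A \<noteq> {}" using assms by auto
  have ne: "set_pmf (pmf_of_set A) \<inter> E \<noteq> {}" using assms A by simp
  have "card A > 0" "card (A \<inter> E) > 0" using assms A by (auto simp: card_gt_0_iff)
  then show "pmf (cond_pmf (pmf_of_set A) E) x = pmf (pmf_of_set (A \<inter> E)) x"
    unfolding pmf_cond[OF ne]
    by (simp add: pmf_of_set[OF A assms(1)] pmf_of_set[OF assms(2)] measure_pmf_of_set[OF A assms(1)]
        assms indicator_def)
qed

section \<open>Runs and arrangements\<close>

lemma sym_neq_iff [simp]: "s \<noteq> X \<longleftrightarrow> s = Y" "s \<noteq> Y \<longleftrightarrow> s = X"
  by (cases s; simp)+

lemma runs_Nil [simp]: "runs a [] = 0"
  by (simp add: runs_def)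

lemma runs_singleton [simp]: "runs a [x] = (if x = a then 1 else 0)"
  by (simp add: runs_def)

lemma runs_Cons_Cons: "runs a (x # y # w) = runs a (y # w) + (if x = a \<and> y \<noteq> a then 1 else 0)"
  by (cases "x = y") (auto simp: runs_def)

lemma runs_rev [simp]: "runs a (rev w) = runs a w"
  by (simp add: runs_def rev_filter[symmetric])

lemma runs_snoc: "runs a (v @ [y]) = runs a v + (if y = a \<and> (v = [] \<or> last v \<noteq> a) then 1 else 0)"
proof -
  have "runs a (v @ [y]) = runs a (y # rev v)"
    by (metis rev.simps(2) rev_rev_ident runs_rev)
  also have "\<dots> = runs a v + (if y = a \<and> (v = [] \<or> last v \<noteq> a) then 1 else 0)"
  proof (cases "rev v")
    case Nil
    then show ?thesis by simp
  next
    case (Cons z zs)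
    then have "last v = z" "runs a v = runs a (z # zs)"
      by (metis last_snoc rev_eq_Cons_iff, metis runs_rev rev_rev_ident)
    then show ?thesis using Cons by (simp add: runs_Cons_Cons)
  qed
  finally show ?thesis .
qed

lemma runs_pos: "a \<in> set w \<Longrightarrow> 0 < runs a w"
  unfolding runs_def by (metis (mono_tags) filter_empty_conv length_greater_0_conv remdups_adj_set)

lemma runs_map_inj:
  assumes "inj f"
  shows "runs (f a) (map f w) = runs a w"
proof -
  have "(\<lambda>s. s = f a) \<circ> f = (\<lambda>s. s = a)"
    using assms by (auto simp: inj_eq)
  then show ?thesis
    unfolding runs_def remdups_adj_map_injective[OF assms] by (simp add: filter_map)
qed

lemma R1_minus_R2:
  assumes "w \<noteq> []"
  shows "int (R1 w) - int (R2 w) = of_bool (hd w = X) + of_bool (last w = X) - 1"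
  using assms unfolding R1_def R2_def
proof (induction w)
  case Nil
  then show ?case by simp
next
  case (Cons x w)
  show ?case
  proof (cases w)
    case Nil
    then show ?thesis by (cases x) auto
  next
    case (Cons y w')
    then show ?thesis using Cons.IH by (cases x; cases y) (auto simp: runs_Cons_Cons)
  qed
qed

lemma R2_snoc: "R2 (v @ [c]) = R2 v + of_bool (c = Y \<and> (v = [] \<or> last v = X))"
  by (simp add: R2_def runs_snoc)

lemma R2_Cons_X [simp]: "R2 (X # v) = R2 v"
  by (cases v) (auto simp: R2_def runs_Cons_Cons)

lemma RM_rev [simp]: "RM (rev w) = RM w"
  by (simp add: RM_def R1_def R2_def)

lemma RM_X_Cons_snoc_X: "RM (X # u @ [X]) = R2 u + 1"
proof -
  have "R2 (X # u @ [X]) = R2 u"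
    by (simp add: R2_snoc)
  moreover have "int (R1 (X # u @ [X])) - int (R2 (X # u @ [X])) = 1"
    using R1_minus_R2[of "X # u @ [X]"] by simp
  ultimately show ?thesis
    by (simp add: RM_def)
qed

lemma RM_X_Cons_ending_Y: "u \<noteq> [] \<Longrightarrow> last u = Y \<Longrightarrow> RM (X # u) = R2 u"
  using R1_minus_R2[of "X # u"] by (simp add: RM_def)

lemma count_list_X_plus_Y: "count_list w X + count_list w Y = length w"
  by (induction w) (auto split: sym.split)

lemma finite_arrangements: "finite (arrangements a b)"
proof -
  have "arrangements a b \<subseteq> {xs. set xs \<subseteq> {X, Y} \<and> length xs = a + b}"
    unfolding arrangements_def using sym.exhaust by auto
  then show ?thesis by (rule finite_subset) (simp add: finite_lists_length_eq)
qed

lemma arrangements_nonempty: "arrangements a b \<noteq> {}"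
proof -
  have count_replicate: "count_list (replicate n x) y = (if x = y then n else 0)" for n and x y :: sym
    by (induction n) auto
  have "replicate a X @ replicate b Y \<in> arrangements a b"
    by (simp add: arrangements_def count_replicate)
  then show ?thesis by blast
qed

lemma set_pmf_arr_pmf: "set_pmf (arr_pmf n1 n2) = arrangements n1 n2"
  unfolding arr_pmf_def by (rule set_pmf_of_set[OF arrangements_nonempty finite_arrangements])

lemma cond_var_arr_pmf:
  assumes "set_pmf (arr_pmf n1 n2) \<inter> E \<noteq> {}"
  shows "cond_var (arr_pmf n1 n2) E f = measure_pmf.variance (pmf_of_set (arrangements n1 n2 \<inter> E)) f"
proof -
  have "arrangements n1 n2 \<inter> E \<noteq> {}"
    using assms by (simp add: set_pmf_arr_pmf)
  then show ?thesis
    unfolding cond_var_def arr_pmf_def by (simp add: cond_pmf_of_set[OF finite_arrangements])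
qed

lemma Y_in_arrangement: "u \<in> arrangements a b \<Longrightarrow> 0 < b \<Longrightarrow> Y \<in> set u"
  using count_list_X_plus_Y[of u] count_notin[of Y u] by (auto simp: arrangements_def)

lemma snoc_in_arrangements [simp]:
  "v @ [c] \<in> arrangements a b \<longleftrightarrow>
   (if c = X then 0 < a \<and> v \<in> arrangements (a - 1) b else 0 < b \<and> v \<in> arrangements a (b - 1))"
  using count_list_X_plus_Y[of v] by (cases c) (auto simp: arrangements_def)

lemma Cons_X_in_arrangements [simp]:
  "X # u \<in> arrangements a b \<longleftrightarrow> 0 < a \<and> u \<in> arrangements (a - 1) b"
  using count_list_X_plus_Y[of u] by (auto simp: arrangements_def)

lemma rev_in_arrangements [simp]: "rev w \<in> arrangements a b \<longleftrightarrow> w \<in> arrangements a b"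
  by (simp add: arrangements_def)

section \<open>Arrangements counted by their number of Y-runs\<close>

definition arrangements_ending_Y :: "nat \<Rightarrow> nat \<Rightarrow> sym list set" where
  "arrangements_ending_Y a b = {u \<in> arrangements a b. u \<noteq> [] \<and> last u = Y}"

lemma arrangements_diff_ending_Y:
  "arrangements a b - arrangements_ending_Y a b = {u \<in> arrangements a b. u = [] \<or> last u = X}"
  by (auto simp: arrangements_ending_Y_def)

lemma Y_runs_not_ending_Y_0:
  "{u \<in> arrangements 0 b - arrangements_ending_Y 0 b. R2 u = j} = (if b = 0 \<and> j = 0 then {[]} else {})"
proof -
  have empty: "u = []" if "u \<in> arrangements 0 b - arrangements_ending_Y 0 b" for u
  proof (rule ccontr)
    assume "u \<noteq> []"
    with that have "last u = X" "count_list u X = 0"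
      unfolding arrangements_diff_ending_Y by (auto simp: arrangements_def)
    then show False
      using \<open>u \<noteq> []\<close> last_in_set[of u] by (simp add: count_list_0_iff)
  qed
  show ?thesis
  proof (rule set_eqI)
    fix u
    show "u \<in> {u \<in> arrangements 0 b - arrangements_ending_Y 0 b. R2 u = j} \<longleftrightarrow>
          u \<in> (if b = 0 \<and> j = 0 then {[]} else {})"
    proof (cases "u = []")
      case True
      then show ?thesis by (simp add: arrangements_ending_Y_def arrangements_def R2_def)
    next
      case False
      then have "u \<notin> arrangements 0 b - arrangements_ending_Y 0 b"
        using empty by blast
      then show ?thesis using False by auto
    qed
  qed
qed

lemma arrangements_ending_Y_0: "arrangements_ending_Y a 0 = {}"
proof -
  have "Y \<notin> set u" if "u \<in> arrangements a 0" for u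
    using that count_list_X_plus_Y[of u] by (simp add: arrangements_def count_list_0_iff)
  then show ?thesis
    using last_in_set by (fastforce simp: arrangements_ending_Y_def)
qed

lemma Y_runs_ending_Y_0: "{u \<in> arrangements_ending_Y a b. R2 u = 0} = {}"
  using runs_pos[of Y] last_in_set by (fastforce simp: arrangements_ending_Y_def R2_def)

lemma Y_runs_not_ending_Y_Suc:
  "{u \<in> arrangements (Suc a) b - arrangements_ending_Y (Suc a) b. R2 u = j}
     = (\<lambda>v. v @ [X]) ` {v \<in> arrangements a b. R2 v = j}"
proof (rule set_eqI, rule iffI)
  fix u
  assume u: "u \<in> {u \<in> arrangements (Suc a) b - arrangements_ending_Y (Suc a) b. R2 u = j}"
  then have "u \<noteq> []"
    by (auto simp: arrangements_def)
  then have "last u = X"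
    using u unfolding arrangements_diff_ending_Y by simp
  define v where "v = butlast u"
  have v: "u = v @ [X]"
    using \<open>u \<noteq> []\<close> \<open>last u = X\<close> unfolding v_def by (metis append_butlast_last_id)
  have "v \<in> arrangements a b" "R2 v = j"
    using u unfolding v arrangements_diff_ending_Y by (simp_all add: R2_snoc)
  then show "u \<in> (\<lambda>v. v @ [X]) ` {v \<in> arrangements a b. R2 v = j}"
    unfolding v by blast
next
  fix u
  assume "u \<in> (\<lambda>v. v @ [X]) ` {v \<in> arrangements a b. R2 v = j}"
  then obtain v where u: "u = v @ [X]" and v: "v \<in> arrangements a b" "R2 v = j"
    by blast
  have "v @ [X] \<in> arrangements (Suc a) b"
    using v by simp
  then show "u \<in> {u \<in> arrangements (Suc a) b - arrangements_ending_Y (Suc a) b. R2 u = j}"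
    using v unfolding u arrangements_diff_ending_Y by (simp add: R2_snoc)
qed

lemma Y_runs_ending_Y_Suc:
  "{u \<in> arrangements_ending_Y a (Suc b). R2 u = Suc j}
     = (\<lambda>v. v @ [Y]) ` ({v \<in> arrangements a b - arrangements_ending_Y a b. R2 v = j}
                        \<union> {v \<in> arrangements_ending_Y a b. R2 v = Suc j})"
proof (rule set_eqI, rule iffI)
  fix u
  assume u: "u \<in> {u \<in> arrangements_ending_Y a (Suc b). R2 u = Suc j}"
  then have "u \<noteq> []" "last u = Y"
    by (simp_all add: arrangements_ending_Y_def)
  define v where "v = butlast u"
  have "u = v @ [Y]"
    using \<open>u \<noteq> []\<close> \<open>last u = Y\<close> unfolding v_def by (metis append_butlast_last_id)
  then show "u \<in> (\<lambda>v. v @ [Y]) ` ({v \<in> arrangements a b - arrangements_ending_Y a b. R2 v = j}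
                        \<union> {v \<in> arrangements_ending_Y a b. R2 v = Suc j})"
    using u by (cases "v = [] \<or> last v = X") (auto simp: arrangements_ending_Y_def R2_snoc)
next
  fix u
  assume "u \<in> (\<lambda>v. v @ [Y]) ` ({v \<in> arrangements a b - arrangements_ending_Y a b. R2 v = j}
                        \<union> {v \<in> arrangements_ending_Y a b. R2 v = Suc j})"
  then obtain v where u: "u = v @ [Y]"
    and v: "v \<in> {v \<in> arrangements a b - arrangements_ending_Y a b. R2 v = j}
              \<union> {v \<in> arrangements_ending_Y a b. R2 v = Suc j}"
    by blast
  show "u \<in> {u \<in> arrangements_ending_Y a (Suc b). R2 u = Suc j}"
  proof (cases "v = []")
    case True
    then have "u = [Y]" "a = 0" "b = 0" "j = 0"
      using u v by (simp_all add: arrangements_def R2_def)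
    then show ?thesis by (simp add: arrangements_ending_Y_def arrangements_def R2_def)
  next
    case False
    have "v \<in> arrangements a b" "R2 v + of_bool (last v = X) = Suc j"
      using v False by (auto simp: arrangements_ending_Y_def)
    then show ?thesis
      using False unfolding u by (simp add: arrangements_ending_Y_def R2_snoc)
  qed
qed

lemma finite_Y_runs_level: "U \<subseteq> arrangements a b \<Longrightarrow> finite {u \<in> U. R2 u = j}"
  using finite_subset finite_arrangements by (metis (no_types, lifting) mem_Collect_eq subsetI)

lemma card_snoc_image: "card ((\<lambda>v. v @ [c]) ` U) = card U"
  by (rule card_image) (auto intro: inj_onI)

lemma card_Y_runs_split:
  "card {u \<in> arrangements a b. R2 u = j}
     = card {u \<in> arrangements a b - arrangements_ending_Y a b. R2 u = j}
       + card {u \<in> arrangements_ending_Y a b. R2 u = j}"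
proof -
  have "{u \<in> arrangements a b. R2 u = j}
      = {u \<in> arrangements a b - arrangements_ending_Y a b. R2 u = j}
        \<union> {u \<in> arrangements_ending_Y a b. R2 u = j}"
    by (auto simp: arrangements_ending_Y_def)
  moreover have "finite {u \<in> arrangements a b - arrangements_ending_Y a b. R2 u = j}"
    by (rule finite_Y_runs_level) blast
  moreover have "finite {u \<in> arrangements_ending_Y a b. R2 u = j}"
    by (rule finite_Y_runs_level) (auto simp: arrangements_ending_Y_def)
  ultimately show ?thesis
    by (simp add: card_Un_disjoint disjoint_iff)
qed

lemma card_Y_runs_not_ending_Y_Suc:
  "card {u \<in> arrangements (Suc a) b - arrangements_ending_Y (Suc a) b. R2 u = j}
     = card {u \<in> arrangements a b - arrangements_ending_Y a b. R2 u = j}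
       + card {u \<in> arrangements_ending_Y a b. R2 u = j}"
  unfolding Y_runs_not_ending_Y_Suc card_snoc_image by (rule card_Y_runs_split)

lemma card_Y_runs_ending_Y_Suc:
  "card {u \<in> arrangements_ending_Y a (Suc b). R2 u = Suc j}
     = card {v \<in> arrangements a b - arrangements_ending_Y a b. R2 v = j}
       + card {v \<in> arrangements_ending_Y a b. R2 v = Suc j}"
  unfolding Y_runs_ending_Y_Suc card_snoc_image
proof (rule card_Un_disjoint)
  show "finite {v \<in> arrangements a b - arrangements_ending_Y a b. R2 v = j}"
    by (rule finite_Y_runs_level) blast
  show "finite {v \<in> arrangements_ending_Y a b. R2 v = Suc j}"
    by (rule finite_Y_runs_level) (auto simp: arrangements_ending_Y_def)
qed auto

text \<open>The empty word counts as not ending in Y, so the recursion on the last letter starts at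
  the empty arrangement.\<close>

lemma card_Y_runs_by_last_letter:
  "card {u \<in> arrangements a b - arrangements_ending_Y a b. R2 u = j} =
     (if b = 0 then (if j = 0 then 1 else 0)
      else if j = 0 then 0 else (a choose j) * ((b - 1) choose (j - 1)))
   \<and> card {u \<in> arrangements_ending_Y a b. R2 u = j} =
     (if b = 0 \<or> j = 0 then 0 else (a choose (j - 1)) * ((b - 1) choose (j - 1)))"
proof (induction "a + b" arbitrary: a b j rule: less_induct)
  case less
  have not_ending_Y: "card {u \<in> arrangements a b - arrangements_ending_Y a b. R2 u = j} =
     (if b = 0 then (if j = 0 then 1 else 0)
      else if j = 0 then 0 else (a choose j) * ((b - 1) choose (j - 1)))"
  proof (cases a)
    case 0
    then show ?thesis unfolding 0 Y_runs_not_ending_Y_0 by simp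
  next
    case (Suc a')
    then show ?thesis
      using less[of a' b] card_Y_runs_not_ending_Y_Suc[of a' b j]
      by (cases j) (simp_all del: binomial_Suc_Suc add: binomial_Suc_Suc[of a'] algebra_simps)
  qed
  have ending_Y: "card {u \<in> arrangements_ending_Y a b. R2 u = j} =
     (if b = 0 \<or> j = 0 then 0 else (a choose (j - 1)) * ((b - 1) choose (j - 1)))"
  proof (cases "b = 0 \<or> j = 0")
    case True
    then show ?thesis by (auto simp: arrangements_ending_Y_0 Y_runs_ending_Y_0)
  next
    case False
    then obtain b' j' where b: "b = Suc b'" and j: "j = Suc j'"
      by (metis not0_implies_Suc)
    then show ?thesis
      using less[of a b'] card_Y_runs_ending_Y_Suc[of a b' j']
      by (cases j'; cases b') (simp_all del: binomial_Suc_Suc add: binomial_Suc_Suc algebra_simps)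
  qed
  show ?case
    using not_ending_Y ending_Y by blast
qed

lemma card_Y_runs:
  "card {u \<in> arrangements a (Suc q). R2 u = Suc i} = (q choose i) * (Suc a choose (i + 1))"
  using card_Y_runs_split[of a "Suc q" "Suc i"] card_Y_runs_by_last_letter[of a "Suc q" "Suc i"]
  by (simp add: algebra_simps)

lemma card_Y_runs_ending_Y:
  "card {u \<in> arrangements_ending_Y a (Suc q). R2 u = Suc i} = (q choose i) * (a choose (i + 0))"
  using card_Y_runs_by_last_letter[of a "Suc q" "Suc i"] by simp

lemma variance_Y_runs:
  assumes "0 < b" "2 \<le> a + b"
  shows "measure_pmf.variance (pmf_of_set (arrangements a b)) (\<lambda>u. real (R2 u)) =
    real a * (real a + 1) * real b * (real b - 1) / ((real (a + b))^2 * (real (a + b) - 1))"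
proof -
  obtain q where b: "b = Suc q"
    using assms(1) gr0_implies_Suc by blast
  have "measure_pmf.variance (pmf_of_set (arrangements a b)) (\<lambda>u. real (R2 u))
      = real q * real (Suc a - 1) * real (Suc a) * real (q + 1)
        / ((real (Suc a + q))^2 * (real (Suc a + q) - 1))"
  proof (rule variance_hypergeometric_Suc)
    show "card {u \<in> arrangements a b. R2 u = Suc i} = (q choose i) * (Suc a choose (i + 1))" for i
      unfolding b by (rule card_Y_runs)
    show "0 < R2 u" if "u \<in> arrangements a b" for u
      unfolding R2_def using that assms(1) by (intro runs_pos Y_in_arrangement)
  qed (use assms b in \<open>simp_all add: finite_arrangements\<close>)
  then show ?thesis
    unfolding b by (simp add: algebra_simps)
qed

lemma variance_Y_runs_ending_Y:
  assumes "0 < b" "3 \<le> a + b"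
  shows "measure_pmf.variance (pmf_of_set (arrangements_ending_Y a b)) (\<lambda>u. real (R2 u)) =
    (real a)^2 * (real b - 1)^2 / ((real (a + b) - 1)^2 * (real (a + b) - 2))"
proof -
  obtain q where b: "b = Suc q"
    using assms(1) gr0_implies_Suc by blast
  have "measure_pmf.variance (pmf_of_set (arrangements_ending_Y a b)) (\<lambda>u. real (R2 u))
      = real q * real (a - 0) * real a * real (q + 0) / ((real (a + q))^2 * (real (a + q) - 1))"
  proof (rule variance_hypergeometric_Suc)
    show "card {u \<in> arrangements_ending_Y a b. R2 u = Suc i} = (q choose i) * (a choose (i + 0))" for i
      unfolding b by (rule card_Y_runs_ending_Y)
    show "0 < R2 u" if "u \<in> arrangements_ending_Y a b" for u
      unfolding R2_def using that last_in_set[of u] by (intro runs_pos) (auto simp: arrangements_ending_Y_def)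
    show "finite (arrangements_ending_Y a b)"
      using finite_arrangements by (rule finite_subset[rotated]) (auto simp: arrangements_ending_Y_def)
  qed (use assms b in simp_all)
  then show ?thesis
    unfolding b by (simp add: algebra_simps power2_eq_square)
qed

lemma hd_last_split: "2 \<le> length w \<Longrightarrow> w = hd w # butlast (tl w) @ [last w]"
  by (cases w) (auto simp: Suc_le_length_iff)

text \<open>The guard \<open>2 \<le> n1\<close> makes the right-hand side empty when \<open>n1 - 2\<close> truncates.\<close>

lemma arrangements_R1_greater_R2:
  assumes "2 \<le> n1 + n2"
  shows "arrangements n1 n2 \<inter> {w. R2 w < R1 w}
           = (\<lambda>u. X # u @ [X]) ` {u \<in> arrangements (n1 - 2) n2. 2 \<le> n1}"
proof (rule set_eqI, rule iffI)
  fix w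
  assume w: "w \<in> arrangements n1 n2 \<inter> {w. R2 w < R1 w}"
  then have len: "2 \<le> length w"
    using assms by (simp add: arrangements_def)
  then have "w \<noteq> []" by auto
  then have "hd w = X \<and> last w = X"
    using R1_minus_R2[of w] w by (auto simp: of_bool_def split: if_splits)
  moreover define u where "u = butlast (tl w)"
  ultimately have w_eq: "w = X # u @ [X]"
    using hd_last_split[OF len] by simp
  then have "u \<in> arrangements (n1 - 2) n2" "2 \<le> n1"
    using w by (simp_all add: numeral_2_eq_2)
  then show "w \<in> (\<lambda>u. X # u @ [X]) ` {u \<in> arrangements (n1 - 2) n2. 2 \<le> n1}"
    using w_eq by blast
next
  fix w
  assume "w \<in> (\<lambda>u. X # u @ [X]) ` {u \<in> arrangements (n1 - 2) n2. 2 \<le> n1}"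
  then obtain u where "w = X # u @ [X]" "u \<in> arrangements (n1 - 2) n2" "2 \<le> n1"
    by blast
  then show "w \<in> arrangements n1 n2 \<inter> {w. R2 w < R1 w}"
    using R1_minus_R2[of w] by (auto simp: R2_snoc numeral_2_eq_2)
qed

definition X_then_ending_Y :: "nat \<Rightarrow> nat \<Rightarrow> sym list set" where
  "X_then_ending_Y n1 n2 = (\<lambda>u. X # u) ` arrangements_ending_Y (n1 - 1) n2"

lemma arrangements_R1_eq_R2:
  assumes "2 \<le> n1 + n2" "0 < n1"
  shows "arrangements n1 n2 \<inter> {w. R1 w = R2 w} = X_then_ending_Y n1 n2 \<union> rev ` X_then_ending_Y n1 n2"
proof (rule set_eqI, rule iffI)
  have into: "w \<in> X_then_ending_Y n1 n2"
    if mem: "w \<in> arrangements n1 n2" and len: "2 \<le> length w" and "hd w = X" "last w = Y" for w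
  proof -
    obtain t where w: "w = X # t"
      using len \<open>hd w = X\<close> by (cases w) auto
    then have "t \<noteq> []" "last t = Y" "t \<in> arrangements (n1 - 1) n2"
      using mem len \<open>last w = Y\<close> by (auto split: if_splits)
    then show ?thesis
      unfolding X_then_ending_Y_def arrangements_ending_Y_def w by blast
  qed
  fix w
  assume w: "w \<in> arrangements n1 n2 \<inter> {w. R1 w = R2 w}"
  then have len: "2 \<le> length w"
    using assms by (simp add: arrangements_def)
  then have "w \<noteq> []" by auto
  then have "(hd w = X \<and> last w = Y) \<or> (hd w = Y \<and> last w = X)"
    using R1_minus_R2[of w] w by (auto simp: of_bool_def split: if_splits)
  then show "w \<in> X_then_ending_Y n1 n2 \<union> rev ` X_then_ending_Y n1 n2"
  proof
    assume "hd w = X \<and> last w = Y"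
    then show ?thesis using into[of w] w len by auto
  next
    assume "hd w = Y \<and> last w = X"
    then have "rev w \<in> X_then_ending_Y n1 n2"
      using into[of "rev w"] w len \<open>w \<noteq> []\<close> by (auto simp: hd_rev last_rev)
    then show ?thesis by (metis UnI2 image_eqI rev_rev_ident)
  qed
next
  have from_X_then_ending_Y: "w \<in> arrangements n1 n2 \<and> R1 w = R2 w"
    if w: "w \<in> X_then_ending_Y n1 n2" for w
  proof -
    obtain u where "w = X # u" "u \<noteq> []" "last u = Y" "u \<in> arrangements (n1 - 1) n2"
      using w by (auto simp: X_then_ending_Y_def arrangements_ending_Y_def)
    then show ?thesis
      using R1_minus_R2[of w] assms(2) by simp
  qed
  fix w
  assume "w \<in> X_then_ending_Y n1 n2 \<union> rev ` X_then_ending_Y n1 n2"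
  then show "w \<in> arrangements n1 n2 \<inter> {w. R1 w = R2 w}"
    using from_X_then_ending_Y by (auto simp: R1_def R2_def)
qed

lemma X_then_ending_Y_disjoint_rev: "X_then_ending_Y n1 n2 \<inter> rev ` X_then_ending_Y n1 n2 = {}"
proof -
  have "hd w = X" "w \<noteq> [] \<and> last w = Y" if "w \<in> X_then_ending_Y n1 n2" for w
    using that by (auto simp: X_then_ending_Y_def arrangements_ending_Y_def)
  then show ?thesis
    by (fastforce simp: hd_rev)
qed

definition swap_sym :: "sym \<Rightarrow> sym" where
  "swap_sym s = (case s of X \<Rightarrow> Y | Y \<Rightarrow> X)"

lemma swap_sym_simps [simp]: "swap_sym X = Y" "swap_sym Y = X"
  by (simp_all add: swap_sym_def)

lemma inj_swap_sym: "inj swap_sym"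
  by (rule injI) (auto simp: swap_sym_def split: sym.splits)

lemma R1_map_swap_sym [simp]: "R1 (map swap_sym w) = R2 w"
  and R2_map_swap_sym [simp]: "R2 (map swap_sym w) = R1 w"
  using runs_map_inj[OF inj_swap_sym, of Y w] runs_map_inj[OF inj_swap_sym, of X w]
  by (simp_all add: R1_def R2_def)

lemma map_swap_sym_arrangements: "map swap_sym ` arrangements n2 n1 = arrangements n1 n2"
proof -
  have count: "count_list (map swap_sym v) (swap_sym a) = count_list v a" for v a
    by (rule count_list_map_conv[OF inj_swap_sym])
  have into: "map swap_sym v \<in> arrangements a b" if "v \<in> arrangements b a" for v a b
    using that count[of v Y] count_list_X_plus_Y[of v] by (auto simp: arrangements_def)
  have involution: "map swap_sym (map swap_sym w) = w" for w
    by (induction w) (auto simp: swap_sym_def split: sym.split)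
  show ?thesis
  proof (rule set_eqI, rule iffI)
    fix w
    assume "w \<in> map swap_sym ` arrangements n2 n1"
    then show "w \<in> arrangements n1 n2" using into by blast
  next
    fix w
    assume "w \<in> arrangements n1 n2"
    then show "w \<in> map swap_sym ` arrangements n2 n1"
      using involution[of w] into[of w] by (metis imageI)
  qed
qed

lemma arrangements_R1_less_R2_swap:
  "arrangements n1 n2 \<inter> {w. R1 w < R2 w} = map swap_sym ` (arrangements n2 n1 \<inter> {w. R2 w < R1 w})"
  unfolding map_swap_sym_arrangements[of n2 n1, symmetric] by auto

lemma cond_var_RM_R1_greater_R2:
  assumes "0 < n2" "4 \<le> n1 + n2"
    and ne: "set_pmf (arr_pmf n1 n2) \<inter> {w. R2 w < R1 w} \<noteq> {}"
  shows "cond_var (arr_pmf n1 n2) {w. R2 w < R1 w} (\<lambda>w. real (RM w)) =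
    real n2 * (real n2 - 1) * (real n1 - 2) * (real n1 - 1)
      / ((real (n1 + n2) - 2)^2 * (real (n1 + n2) - 3))"
proof -
  let ?U = "arrangements (n1 - 2) n2"
  have events: "arrangements n1 n2 \<inter> {w. R2 w < R1 w} = (\<lambda>u. X # u @ [X]) ` {u \<in> ?U. 2 \<le> n1}"
    using assms(2) by (intro arrangements_R1_greater_R2) simp
  then have "2 \<le> n1"
    using ne by (auto simp: set_pmf_arr_pmf)
  have "cond_var (arr_pmf n1 n2) {w. R2 w < R1 w} (\<lambda>w. real (RM w))
      = measure_pmf.variance (pmf_of_set ((\<lambda>u. X # u @ [X]) ` ?U)) (\<lambda>w. real (RM w))"
    using events \<open>2 \<le> n1\<close> by (simp add: cond_var_arr_pmf[OF ne])
  also have "\<dots> = measure_pmf.variance (pmf_of_set ?U) (\<lambda>u. real (RM (X # u @ [X])))"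
    using arrangements_nonempty finite_arrangements by (intro variance_pmf_of_set_image) (auto intro: inj_onI)
  also have "\<dots> = measure_pmf.variance (pmf_of_set ?U) (\<lambda>u. real (R2 u))"
    by (rule variance_pmf_of_set_cong[where c = 1])
      (simp_all add: RM_X_Cons_snoc_X finite_arrangements arrangements_nonempty)
  also have "\<dots> = real (n1 - 2) * (real (n1 - 2) + 1) * real n2 * (real n2 - 1)
      / ((real (n1 - 2 + n2))^2 * (real (n1 - 2 + n2) - 1))"
    using assms by (intro variance_Y_runs) auto
  finally show ?thesis
    using \<open>2 \<le> n1\<close> by (simp add: algebra_simps)
qed

lemma cond_var_RM_R1_less_R2:
  assumes "0 < n1" "4 \<le> n1 + n2"
    and ne: "set_pmf (arr_pmf n1 n2) \<inter> {w. R1 w < R2 w} \<noteq> {}"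
  shows "cond_var (arr_pmf n1 n2) {w. R1 w < R2 w} (\<lambda>w. real (RM w)) =
    real n1 * (real n1 - 1) * (real n2 - 2) * (real n2 - 1)
      / ((real (n1 + n2) - 2)^2 * (real (n1 + n2) - 3))"
proof -
  let ?V = "arrangements n2 n1 \<inter> {w. R2 w < R1 w}"
  have ne': "set_pmf (arr_pmf n2 n1) \<inter> {w. R2 w < R1 w} \<noteq> {}"
    using ne by (auto simp: set_pmf_arr_pmf arrangements_R1_less_R2_swap)
  then have "?V \<noteq> {}"
    by (simp add: set_pmf_arr_pmf)
  have "cond_var (arr_pmf n1 n2) {w. R1 w < R2 w} (\<lambda>w. real (RM w))
      = measure_pmf.variance (pmf_of_set (map swap_sym ` ?V)) (\<lambda>w. real (RM w))"
    by (simp add: cond_var_arr_pmf[OF ne] arrangements_R1_less_R2_swap)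
  also have "\<dots> = measure_pmf.variance (pmf_of_set ?V) (\<lambda>w. real (RM (map swap_sym w)))"
    using \<open>?V \<noteq> {}\<close> inj_swap_sym
    by (intro variance_pmf_of_set_image) (auto simp: finite_arrangements inj_on_def)
  also have "\<dots> = cond_var (arr_pmf n2 n1) {w. R2 w < R1 w} (\<lambda>w. real (RM w))"
    by (simp add: cond_var_arr_pmf[OF ne'] RM_def max.commute)
  also have "\<dots> = real n1 * (real n1 - 1) * (real n2 - 2) * (real n2 - 1)
      / ((real (n2 + n1) - 2)^2 * (real (n2 + n1) - 3))"
    using assms(1,2) ne' by (intro cond_var_RM_R1_greater_R2) auto
  finally show ?thesis
    by (simp add: add.commute)
qed

lemma cond_var_RM_R1_eq_R2:
  assumes "0 < n1" "0 < n2" "4 \<le> n1 + n2"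
    and ne: "set_pmf (arr_pmf n1 n2) \<inter> {w. R1 w = R2 w} \<noteq> {}"
  shows "cond_var (arr_pmf n1 n2) {w. R1 w = R2 w} (\<lambda>w. real (RM w)) =
    (real n2 - 1)^2 * (real n1 - 1)^2 / ((real (n1 + n2) - 2)^2 * (real (n1 + n2) - 3))"
proof -
  let ?P = "X_then_ending_Y n1 n2" and ?U = "arrangements_ending_Y (n1 - 1) n2"
  have events: "arrangements n1 n2 \<inter> {w. R1 w = R2 w} = ?P \<union> rev ` ?P"
    using assms by (intro arrangements_R1_eq_R2) auto
  have "finite ?U"
    using finite_arrangements by (rule finite_subset[rotated]) (auto simp: arrangements_ending_Y_def)
  moreover have "?U \<noteq> {}"
    using ne events by (auto simp: set_pmf_arr_pmf X_then_ending_Y_def)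
  ultimately have "finite ?P" "?P \<noteq> {}"
    by (simp_all add: X_then_ending_Y_def)
  have "cond_var (arr_pmf n1 n2) {w. R1 w = R2 w} (\<lambda>w. real (RM w))
      = measure_pmf.variance (pmf_of_set (?P \<union> rev ` ?P)) (\<lambda>w. real (RM w))"
    by (simp add: cond_var_arr_pmf[OF ne] events)
  also have "\<dots> = measure_pmf.variance (pmf_of_set ?P) (\<lambda>w. real (RM w))"
    using \<open>finite ?P\<close> \<open>?P \<noteq> {}\<close> X_then_ending_Y_disjoint_rev
    by (intro variance_pmf_of_set_union_image) auto
  also have "\<dots> = measure_pmf.variance (pmf_of_set ?U) (\<lambda>u. real (RM (X # u)))"
    unfolding X_then_ending_Y_def using \<open>finite ?U\<close> \<open>?U \<noteq> {}\<close>
    by (intro variance_pmf_of_set_image) (auto intro: inj_onI)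
  also have "\<dots> = measure_pmf.variance (pmf_of_set ?U) (\<lambda>u. real (R2 u))"
    using \<open>finite ?U\<close> \<open>?U \<noteq> {}\<close>
    by (intro variance_pmf_of_set_cong[where c = 0])
      (auto simp: arrangements_ending_Y_def RM_X_Cons_ending_Y)
  also have "\<dots> = (real (n1 - 1))^2 * (real n2 - 1)^2
      / ((real (n1 - 1 + n2) - 1)^2 * (real (n1 - 1 + n2) - 2))"
    using assms by (intro variance_Y_runs_ending_Y) auto
  finally show ?thesis
    using assms(1) by (simp add: algebra_simps)
qed

theorem lemma3:
  fixes n1 n2 :: nat
  assumes "n1 \<ge> 1" and "n2 \<ge> 1" and "n1 + n2 > 3"
  defines "n \<equiv> real (n1 + n2)"
  shows
   "(set_pmf (arr_pmf n1 n2) \<inter> {w. R1 w > R2 w} \<noteq> {} \<longrightarrow>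
      cond_var (arr_pmf n1 n2) {w. R1 w > R2 w} (\<lambda>w. real (RM w)) =
      real n2 * (real n2 - 1) * (real n1 - 2) * (real n1 - 1) / ((n - 2)^2 * (n - 3)))
  \<and> (set_pmf (arr_pmf n1 n2) \<inter> {w. R1 w < R2 w} \<noteq> {} \<longrightarrow>
      cond_var (arr_pmf n1 n2) {w. R1 w < R2 w} (\<lambda>w. real (RM w)) =
      real n1 * (real n1 - 1) * (real n2 - 2) * (real n2 - 1) / ((n - 2)^2 * (n - 3)))
  \<and> (set_pmf (arr_pmf n1 n2) \<inter> {w. R1 w = R2 w} \<noteq> {} \<longrightarrow>
      cond_var (arr_pmf n1 n2) {w. R1 w = R2 w} (\<lambda>w. real (RM w)) =
      (real n2 - 1)^2 * (real n1 - 1)^2 / ((n - 2)^2 * (n - 3)))"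
  using assms cond_var_RM_R1_greater_R2[of n2 n1] cond_var_RM_R1_less_R2[of n1 n2]
    cond_var_RM_R1_eq_R2[of n1 n2]
  unfolding n_def by auto

end
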